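(* Let $\mathcal{C}$ be a category. Let $\rho$ be a PBPO$^{+}$ rewrite rule consisting of morphisms $l : K \to L$, $r : K \to R$, monomorphisms $t_L : L \rightarrowtail L'$ and $t_K : K \rightarrowtail K'$, and $l' : K' \to L'$, such that $L \xleftarrow{l} K \xrightarrow{t_K} K'$ is a pullback of $L \xrightarrow{t_L} L' \xleftarrow{l'} K'$. Let $G_L$ be an object, $\alpha : G_L \to L'$ and $m : L \to G_L$ morphisms such that $L \xleftarrow{1_L} L \xrightarrow{m} G_L$ is a pullback of $L \xrightarrow{t_L} L' \xleftarrow{\alpha} G_L$, and let $G_L \xleftarrow{g_L} G_K \xrightarrow{u'} K'$ be a pullback of $G_L \xrightarrow{\alpha} L' \xleftarrow{l'} K'$. Then there exists a morphism $u : K \to G_K$ such that $L \xleftarrow{l} K \xrightarrow{u} G_K$ is a pullback of $L \xrightarrow{m} G_L \xleftarrow{g_L} G_K$, $t_K = u' \circ u$, and $u$ is a monomorphism.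
   Context: A PBPO$^{+}$ rewrite rule in a category is a diagram $L \xleftarrow{l} K \xrightarrow{r} R$ together with monomorphisms $t_L : L \rightarrowtail L'$, $t_K : K \rightarrowtail K'$ and a morphism $l' : K' \to L'$ such that the square $t_L \circ l = l' \circ t_K$ is a pullback square. The pair $(m,\alpha)$ with $L \xleftarrow{1_L} L \xrightarrow{m} G_L$ a pullback of $t_L$ and $\alpha$ is called a strong match. *)

theory Defs
  imports Main
begin

text \<open>Composition is written in diagrammatic-application
  order: Cmp C g f denotes g after f (defined when Cod f = Dom g).\<close>

record ('o, 'a) category =
  Obj :: "'o set"
  Arr :: "'a set"
  Dom :: "'a \<Rightarrow> 'o"
  Cod :: "'a \<Rightarrow> 'o"
  Idt :: "'o \<Rightarrow> 'a"
  Cmp :: "'a \<Rightarrow> 'a \<Rightarrow> 'a"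

definition hom :: "('o, 'a) category \<Rightarrow> 'o \<Rightarrow> 'o \<Rightarrow> 'a set" where
  "hom C X Y = {f \<in> Arr C. Dom C f = X \<and> Cod C f = Y}"

definition is_category :: "('o, 'a) category \<Rightarrow> bool" where
  "is_category C \<longleftrightarrow>
     (\<forall>f \<in> Arr C. Dom C f \<in> Obj C \<and> Cod C f \<in> Obj C) \<and>
     (\<forall>X \<in> Obj C. Idt C X \<in> hom C X X) \<and>
     (\<forall>f \<in> Arr C. \<forall>g \<in> Arr C. Cod C f = Dom C g \<longrightarrow>
        Cmp C g f \<in> hom C (Dom C f) (Cod C g)) \<and>
     (\<forall>f \<in> Arr C. Cmp C f (Idt C (Dom C f)) = f \<and> Cmp C (Idt C (Cod C f)) f = f) \<and>
     (\<forall>f \<in> Arr C. \<forall>g \<in> Arr C. \<forall>h \<in> Arr C.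
        Cod C f = Dom C g \<longrightarrow> Cod C g = Dom C h \<longrightarrow>
        Cmp C h (Cmp C g f) = Cmp C (Cmp C h g) f)"

definition is_mono :: "('o, 'a) category \<Rightarrow> 'a \<Rightarrow> bool" where
  "is_mono C m \<longleftrightarrow> m \<in> Arr C \<and>
     (\<forall>g \<in> Arr C. \<forall>h \<in> Arr C. Dom C g = Dom C h \<longrightarrow> Cod C g = Dom C m \<longrightarrow>
        Cod C h = Dom C m \<longrightarrow> Cmp C m g = Cmp C m h \<longrightarrow> g = h)"

text \<open>is_pullback C f g p q: for a cospan A -f-> X <-g- B, the span A <-p- P -q-> B
  is a pullback of it.\<close>
definition is_pullback :: "('o, 'a) category \<Rightarrow> 'a \<Rightarrow> 'a \<Rightarrow> 'a \<Rightarrow> 'a \<Rightarrow> bool" where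
  "is_pullback C f g p q \<longleftrightarrow>
     f \<in> Arr C \<and> g \<in> Arr C \<and> p \<in> Arr C \<and> q \<in> Arr C \<and>
     Cod C f = Cod C g \<and> Cod C p = Dom C f \<and> Cod C q = Dom C g \<and> Dom C p = Dom C q \<and>
     Cmp C f p = Cmp C g q \<and>
     (\<forall>h \<in> Arr C. \<forall>k \<in> Arr C.
        Cod C h = Dom C f \<longrightarrow> Cod C k = Dom C g \<longrightarrow> Dom C h = Dom C k \<longrightarrow>
        Cmp C f h = Cmp C g k \<longrightarrow>
        (\<exists>!u. u \<in> hom C (Dom C h) (Dom C p) \<and> Cmp C p u = h \<and> Cmp C q u = k))"

end

theory Submission
  imports Defs
begin

text \<open>Since the match square commutes, t_L = \<alpha> \<circ> m, so the rule pullback is the outer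
  rectangle obtained by pasting the square (m, g_L) to the left of the pullback square
  (\<alpha>, l') defining G_K. The arrow u is the mediating arrow into G_K for the cone
  (m \<circ> l, t_K); by the pullback lemma the left square is then a pullback, and u is mono
  because u' \<circ> u = t_K is.\<close>

lemma cat_comp_in_hom:
  assumes "is_category C" "f \<in> hom C X Y" "g \<in> hom C Y Z"
  shows "Cmp C g f \<in> hom C X Z"
  using assms unfolding is_category_def hom_def by auto

lemma cat_comp_assoc:
  assumes "is_category C" "f \<in> hom C X Y" "g \<in> hom C Y Z" "h \<in> hom C Z W"
  shows "Cmp C h (Cmp C g f) = Cmp C (Cmp C h g) f"
  using assms unfolding is_category_def hom_def by auto

lemma cat_comp_Idt_right:
  assumes "is_category C" "f \<in> hom C X Y"
  shows "Cmp C f (Idt C X) = f"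
  using assms unfolding is_category_def hom_def by auto

lemma is_monoI:
  assumes "m \<in> hom C X Y"
    and "\<And>Z g h. g \<in> hom C Z X \<Longrightarrow> h \<in> hom C Z X \<Longrightarrow> Cmp C m g = Cmp C m h \<Longrightarrow> g = h"
  shows "is_mono C m"
  using assms unfolding is_mono_def hom_def by auto

lemma is_monoD:
  assumes "is_mono C m" "m \<in> hom C X Y" "g \<in> hom C Z X" "h \<in> hom C Z X"
    and "Cmp C m g = Cmp C m h"
  shows "g = h"
  using assms unfolding is_mono_def hom_def by auto

lemma mono_if_comp_mono:
  assumes cat: "is_category C" and f: "f \<in> hom C X Y" and g: "g \<in> hom C Y Z"
    and mono: "is_mono C (Cmp C g f)"
  shows "is_mono C f"
  using f
proof (rule is_monoI)
  fix W a b
  assume a: "a \<in> hom C W X" and b: "b \<in> hom C W X" and "Cmp C f a = Cmp C f b"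
  then have "Cmp C (Cmp C g f) a = Cmp C (Cmp C g f) b"
    using cat_comp_assoc[OF cat _ f g] by metis
  then show "a = b"
    using is_monoD[OF mono cat_comp_in_hom[OF cat f g] a b] by blast
qed

lemma is_pullbackI:
  assumes "f \<in> hom C A X" "g \<in> hom C B X" "p \<in> hom C P A" "q \<in> hom C P B"
    and "Cmp C f p = Cmp C g q"
    and "\<And>Z h k. h \<in> hom C Z A \<Longrightarrow> k \<in> hom C Z B \<Longrightarrow> Cmp C f h = Cmp C g k \<Longrightarrow>
           \<exists>!u. u \<in> hom C Z P \<and> Cmp C p u = h \<and> Cmp C q u = k"
  shows "is_pullback C f g p q"
proof -
  have "\<exists>!u. u \<in> hom C (Dom C h) (Dom C p) \<and> Cmp C p u = h \<and> Cmp C q u = k"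
    if "h \<in> Arr C" "k \<in> Arr C" "Cod C h = Dom C f" "Cod C k = Dom C g"
      "Dom C h = Dom C k" "Cmp C f h = Cmp C g k" for h k
    using that assms(1-4) assms(6)[of h "Dom C h" k] unfolding hom_def by auto
  then show ?thesis
    using assms(1-5) unfolding is_pullback_def hom_def by auto
qed

lemma pullback_commutes:
  assumes "is_pullback C f g p q"
  shows "Cmp C f p = Cmp C g q"
  using assms unfolding is_pullback_def by blast

lemma pullback_mediating:
  assumes "is_pullback C f g p q" "p \<in> hom C P A" "q \<in> hom C P B"
    and "h \<in> hom C Z A" "k \<in> hom C Z B" "Cmp C f h = Cmp C g k"
  shows "\<exists>!u. u \<in> hom C Z P \<and> Cmp C p u = h \<and> Cmp C q u = k"
proof -
  have "Dom C h = Z" "Dom C p = P" "h \<in> Arr C" "k \<in> Arr C" "Cod C h = Dom C f"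
    "Cod C k = Dom C g" "Dom C h = Dom C k"
    using assms unfolding is_pullback_def hom_def by auto
  then show ?thesis
    using assms(1,6) unfolding is_pullback_def by metis
qed

lemma pullback_mediating_unique:
  assumes cat: "is_category C" and pb: "is_pullback C f g p q"
    and p: "p \<in> hom C P A" and q: "q \<in> hom C P B"
    and v: "v \<in> hom C Z P" and w: "w \<in> hom C Z P"
    and "Cmp C p v = Cmp C p w" "Cmp C q v = Cmp C q w"
  shows "v = w"
proof -
  obtain X where f: "f \<in> hom C A X" and g: "g \<in> hom C B X"
    using pb p q unfolding is_pullback_def hom_def by auto
  have "Cmp C f (Cmp C p w) = Cmp C g (Cmp C q w)"
    using pullback_commutes[OF pb] cat_comp_assoc[OF cat w p f] cat_comp_assoc[OF cat w q g]
    by simp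
  then show ?thesis
    using pullback_mediating[OF pb p q cat_comp_in_hom[OF cat w p] cat_comp_in_hom[OF cat w q]]
      v w assms(7,8) by blast
qed

lemma pullback_left_square:
  assumes cat: "is_category C"
    and m: "m \<in> hom C A B" and g: "g \<in> hom C D B" and \<alpha>: "\<alpha> \<in> hom C B X"
    and l': "l' \<in> hom C E X" and l: "l \<in> hom C P A" and u: "u \<in> hom C P D"
    and u': "u' \<in> hom C D E"
    and right: "is_pullback C \<alpha> l' g u'"
    and outer: "is_pullback C (Cmp C \<alpha> m) l' l (Cmp C u' u)"
    and left_comm: "Cmp C m l = Cmp C g u"
  shows "is_pullback C m g l u"
  using m g l u left_comm
proof (rule is_pullbackI)
  fix Z h k
  assume h: "h \<in> hom C Z A" and k: "k \<in> hom C Z D" and hk: "Cmp C m h = Cmp C g k"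
  have u'k: "Cmp C u' k \<in> hom C Z E"
    using cat_comp_in_hom[OF cat k u'] .
  have "Cmp C (Cmp C \<alpha> m) h = Cmp C \<alpha> (Cmp C g k)"
    using hk cat_comp_assoc[OF cat h m \<alpha>] by simp
  also have "\<dots> = Cmp C l' (Cmp C u' k)"
    using pullback_commutes[OF right] cat_comp_assoc[OF cat k g \<alpha>] cat_comp_assoc[OF cat k u' l']
    by simp
  finally obtain v where v: "v \<in> hom C Z P" "Cmp C l v = h" "Cmp C (Cmp C u' u) v = Cmp C u' k"
    using pullback_mediating[OF outer l cat_comp_in_hom[OF cat u u'] h u'k] by blast
  have "Cmp C u v = k"
  proof (rule pullback_mediating_unique[OF cat right g u' cat_comp_in_hom[OF cat v(1) u] k])
    show "Cmp C g (Cmp C u v) = Cmp C g k"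
      using v hk left_comm cat_comp_assoc[OF cat v(1) u g] cat_comp_assoc[OF cat v(1) l m] by simp
    show "Cmp C u' (Cmp C u v) = Cmp C u' k"
      using v cat_comp_assoc[OF cat v(1) u u'] by simp
  qed
  moreover have "w = v" if w: "w \<in> hom C Z P" "Cmp C l w = h" "Cmp C u w = k" for w
    using pullback_mediating_unique[OF cat outer l cat_comp_in_hom[OF cat u u'] w(1) v(1)]
      v w cat_comp_assoc[OF cat w(1) u u'] by simp
  ultimately show "\<exists>!w. w \<in> hom C Z P \<and> Cmp C l w = h \<and> Cmp C u w = k"
    using v by blast
qed

theorem lemma1:
  fixes C :: "('o, 'a) category"
    and L K R L' K' G_L G_K :: 'o
    and l r t_L t_K l' \<alpha> m g_L u' :: 'a
  assumes cat: "is_category C"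
    and objs: "L \<in> Obj C" "K \<in> Obj C" "R \<in> Obj C" "L' \<in> Obj C" "K' \<in> Obj C"
              "G_L \<in> Obj C" "G_K \<in> Obj C"
    and l: "l \<in> hom C K L" and r: "r \<in> hom C K R"
    and tL: "t_L \<in> hom C L L'" "is_mono C t_L"
    and tK: "t_K \<in> hom C K K'" "is_mono C t_K"
    and l': "l' \<in> hom C K' L'"
    and rule_pb: "is_pullback C t_L l' l t_K"
    and \<alpha>: "\<alpha> \<in> hom C G_L L'"
    and m: "m \<in> hom C L G_L"
    and match_pb: "is_pullback C t_L \<alpha> (Idt C L) m"
    and gL: "g_L \<in> hom C G_K G_L"
    and u': "u' \<in> hom C G_K K'"
    and GK_pb: "is_pullback C \<alpha> l' g_L u'"
  shows "\<exists>u. u \<in> hom C K G_K \<and> is_pullback C m g_L l u \<and>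
             t_K = Cmp C u' u \<and> is_mono C u"
proof -
  have tL_factors: "t_L = Cmp C \<alpha> m"
    using pullback_commutes[OF match_pb] cat_comp_Idt_right[OF cat tL(1)] by simp
  have "Cmp C \<alpha> (Cmp C m l) = Cmp C l' t_K"
    using pullback_commutes[OF rule_pb] tL_factors cat_comp_assoc[OF cat l m \<alpha>] by simp
  then obtain u where u: "u \<in> hom C K G_K" "Cmp C g_L u = Cmp C m l" "Cmp C u' u = t_K"
    using pullback_mediating[OF GK_pb gL u' cat_comp_in_hom[OF cat l m] tK(1)] by blast
  have "is_pullback C m g_L l u"
    using pullback_left_square[OF cat m gL \<alpha> l' l u(1) u' GK_pb] rule_pb tL_factors u by simp
  moreover have "is_mono C u"
    using mono_if_comp_mono[OF cat u(1) u'] tK(2) u(3) by simp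
  ultimately show ?thesis
    using u by metis
qed

end
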